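(* Let $a,b\in\mathbb{Q}^*$ be multiplicatively independent. Then the set of primes $p$ with $\operatorname{ord}_p(a)=\operatorname{ord}_p(b)=0$ such that $(b \bmod p)$ lies in the subgroup $\langle a \bmod p\rangle$ of $\mathbb{F}_p^*$ is infinite.
   Context: Elements $a,b\in\mathbb{Q}^*$ are multiplicatively independent if there are no integers $x,y$, not both zero, with $a^xb^y=1$. For a prime $p$ and $x\in\mathbb{Q}^*$, $\operatorname{ord}_p(x)$ denotes the exponent of $p$ in $x$; when $\operatorname{ord}_p(x)=0$, $x \bmod p$ denotes the reduction of $x$ in $\mathbb{F}_p^*$. *)

theory Defs
  imports Complex_Main "HOL-Computational_Algebra.Primes" "HOL-Number_Theory.Cong"
begin

definition rat_num :: "rat \<Rightarrow> int" where "rat_num x = fst (quotient_of x)"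
definition rat_den :: "rat \<Rightarrow> int" where "rat_den x = snd (quotient_of x)"

definition ord_p :: "nat \<Rightarrow> rat \<Rightarrow> int" where
  "ord_p p x = int (multiplicity (int p) (rat_num x)) - int (multiplicity (int p) (rat_den x))"

text \<open>Equality of reductions modulo p of two rationals x, y with ord_p = 0:
  (x mod p) = (y mod p) in F_p, i.e. num x * den y = num y * den x mod p.\<close>
definition rat_mod_eq :: "nat \<Rightarrow> rat \<Rightarrow> rat \<Rightarrow> bool" where
  "rat_mod_eq p x y \<longleftrightarrow> [rat_num x * rat_den y = rat_num y * rat_den x] (mod int p)"

definition mult_independent :: "rat \<Rightarrow> rat \<Rightarrow> bool" where
  "mult_independent a b \<longleftrightarrow>
     \<not> (\<exists>x y :: int. (x \<noteq> 0 \<or> y \<noteq> 0) \<and> a powi x * b powi y = 1)"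

end

theory Submission
  imports Defs "HOL-Number_Theory.Number_Theory"
begin

(* Write a = A/B and b = C/D in lowest terms; independence excludes a = 1 and a = -1, i.e.
   |A| \<noteq> |B|. For primes p not dividing ABCD, b is a power a^n modulo p iff p divides
   C B^n - A^n D. Up to a fixed factor and an index shift these numbers are
   M k = X B^k - A^k Y with X prime to A and Y prime to B, and every prime divisor of M k
   (k > 0) avoids ABCD. If only finitely many primes divided some M k, let P be their product
   and pick c with M c \<noteq> 0. By Euler's theorem M (c + m L) \<equiv> M c modulo |M c| P, where
   L = totient (|M c| P), so M (c + m L) = M c z with z \<equiv> 1 (mod P). As |M k| grows without
   bound, |z| > 1 for some m, and a prime factor of z is a prime divisor missing from P. *)

lemma eventually_power_diff_gt:
  fixes a b x y :: real
  assumes "1 \<le> b" "b < a"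
  shows "eventually (\<lambda>k. y < a ^ k - x * b ^ k) sequentially"
proof -
  define r where "r = a / b"
  have "1 < r" using assms unfolding r_def by simp
  then obtain N where N: "x + \<bar>y\<bar> < r ^ N" using real_arch_pow by blast
  show ?thesis
  proof (rule eventually_sequentiallyI)
    fix k assume "N \<le> k"
    then have rk: "x + \<bar>y\<bar> < r ^ k"
      using N \<open>1 < r\<close> power_increasing[of N k r] by linarith
    have "a ^ k - x * b ^ k = b ^ k * (r ^ k - x)"
      using assms unfolding r_def by (simp add: power_divide algebra_simps)
    also have "\<dots> \<ge> r ^ k - x"
      using rk assms by (intro mult_le_cancel_right1[THEN iffD2]) auto
    finally show "y < a ^ k - x * b ^ k" using rk by linarith
  qed
qed

lemma eventually_abs_diff_powers_gt:
  fixes A B X Y :: int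
  assumes "\<bar>A\<bar> \<noteq> \<bar>B\<bar>" "A \<noteq> 0" "B \<noteq> 0" "X \<noteq> 0" "Y \<noteq> 0"
  shows "eventually (\<lambda>k. y < \<bar>X * B ^ k - A ^ k * Y\<bar>) sequentially"
proof -
  have lower: "\<bar>Y\<bar> * \<bar>A\<bar> ^ k - \<bar>X\<bar> * \<bar>B\<bar> ^ k \<le> \<bar>X * B ^ k - A ^ k * Y\<bar>"
    and upper: "\<bar>X\<bar> * \<bar>B\<bar> ^ k - \<bar>Y\<bar> * \<bar>A\<bar> ^ k \<le> \<bar>X * B ^ k - A ^ k * Y\<bar>" for k
    by (auto simp: abs_mult power_abs mult.commute intro: order.trans[OF _ abs_triangle_ineq2]
        order.trans[OF _ abs_triangle_ineq3])
  consider "\<bar>B\<bar> < \<bar>A\<bar>" | "\<bar>A\<bar> < \<bar>B\<bar>" using assms(1) by linarith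
  then show ?thesis
  proof cases
    case 1
    then have "eventually (\<lambda>k. real_of_int y <
        of_int \<bar>A\<bar> ^ k - of_int \<bar>X\<bar> * of_int \<bar>B\<bar> ^ k) sequentially"
      using assms(3) by (intro eventually_power_diff_gt) auto
    then show ?thesis
    proof (rule eventually_mono)
      fix k assume "real_of_int y < of_int \<bar>A\<bar> ^ k - of_int \<bar>X\<bar> * of_int \<bar>B\<bar> ^ k"
      then have "y < \<bar>A\<bar> ^ k - \<bar>X\<bar> * \<bar>B\<bar> ^ k"
        unfolding of_int_power[symmetric] of_int_mult[symmetric] of_int_diff[symmetric] of_int_less_iff .
      moreover have "\<bar>A\<bar> ^ k \<le> \<bar>Y\<bar> * \<bar>A\<bar> ^ k" using assms(5) by (auto simp: mult_le_cancel_right1)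
      ultimately show "y < \<bar>X * B ^ k - A ^ k * Y\<bar>" using lower[of k] by linarith
    qed
  next
    case 2
    then have "eventually (\<lambda>k. real_of_int y <
        of_int \<bar>B\<bar> ^ k - of_int \<bar>Y\<bar> * of_int \<bar>A\<bar> ^ k) sequentially"
      using assms(2) by (intro eventually_power_diff_gt) auto
    then show ?thesis
    proof (rule eventually_mono)
      fix k assume "real_of_int y < of_int \<bar>B\<bar> ^ k - of_int \<bar>Y\<bar> * of_int \<bar>A\<bar> ^ k"
      then have "y < \<bar>B\<bar> ^ k - \<bar>Y\<bar> * \<bar>A\<bar> ^ k"
        unfolding of_int_power[symmetric] of_int_mult[symmetric] of_int_diff[symmetric] of_int_less_iff .
      moreover have "\<bar>B\<bar> ^ k \<le> \<bar>X\<bar> * \<bar>B\<bar> ^ k" using assms(4) by (auto simp: mult_le_cancel_right1)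
      ultimately show "y < \<bar>X * B ^ k - A ^ k * Y\<bar>" using upper[of k] by linarith
    qed
  qed
qed

lemma coprime_diff_powers:
  fixes A B X Y :: int
  assumes "coprime X A" "coprime Y B" "coprime A B" "k > 0"
  shows "coprime (X * B ^ k - A ^ k * Y) (A * B)"
proof -
  have "[X * B ^ k - A ^ k * Y = X * B ^ k] (mod A)"
    and "[X * B ^ k - A ^ k * Y = - (A ^ k * Y)] (mod B)"
    using \<open>k > 0\<close> by (simp_all add: cong_iff_dvd_diff)
  moreover have "coprime (X * B ^ k) A" "coprime (- (A ^ k * Y)) B"
    using assms by (simp_all add: coprime_commute)
  ultimately show ?thesis by (simp add: coprime_cong_cong_left)
qed

lemma euler_theorem_int:
  fixes a m :: int
  assumes "m > 0" "coprime a m"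
  shows "[a ^ totient (nat m) = 1] (mod m)"
proof (cases "m = 1")
  case False
  then interpret residues m "residue_ring m" using \<open>m > 0\<close> by unfold_locales simp
  show ?thesis using \<open>coprime a m\<close> by (rule euler_theorem)
qed simp

lemma diff_powers_shift_cong:
  fixes A B X Y R :: int
  assumes "R > 0" "coprime A R" "coprime B R"
  shows "[X * B ^ (c + m * totient (nat R)) - A ^ (c + m * totient (nat R)) * Y
          = X * B ^ c - A ^ c * Y] (mod R)"
proof -
  have shift: "[Z ^ (c + m * totient (nat R)) = Z ^ c] (mod R)" if "coprime Z R" for Z :: int
  proof -
    have "[(Z ^ totient (nat R)) ^ m = 1 ^ m] (mod R)"
      using euler_theorem_int[OF \<open>R > 0\<close> that] by (rule cong_pow)
    then have "[Z ^ c * (Z ^ totient (nat R)) ^ m = Z ^ c * 1] (mod R)"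
      by (intro cong_mult cong_refl) simp
    moreover have "Z ^ (c + m * totient (nat R)) = Z ^ c * (Z ^ totient (nat R)) ^ m"
      by (simp add: power_add mult.commute flip: power_mult)
    ultimately show ?thesis by simp
  qed
  show ?thesis using shift[OF \<open>coprime A R\<close>] shift[OF \<open>coprime B R\<close>]
    by (intro cong_diff cong_mult cong_refl)
qed

lemma infinite_prime_divisors_diff_powers:
  fixes A B X Y :: int
  assumes "\<bar>A\<bar> \<noteq> \<bar>B\<bar>" "A \<noteq> 0" "B \<noteq> 0" "X \<noteq> 0" "Y \<noteq> 0"
    and "coprime A B" "coprime X A" "coprime Y B"
  shows "infinite {p :: nat. prime p \<and> (\<exists>k>0. int p dvd X * B ^ k - A ^ k * Y)}"
proof
  define M where "M k = X * B ^ k - A ^ k * Y" for k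
  define F where "F = {p :: nat. prime p \<and> (\<exists>k>0. int p dvd M k)}"
  assume "finite {p :: nat. prime p \<and> (\<exists>k>0. int p dvd X * B ^ k - A ^ k * Y)}"
  then have "finite F" unfolding F_def M_def .
  have grows: "eventually (\<lambda>k. y < \<bar>M k\<bar>) sequentially" for y
    unfolding M_def using assms(1-5) by (rule eventually_abs_diff_powers_gt)
  have coprime_M: "coprime (M k) (A * B)" if "k > 0" for k
    unfolding M_def using assms(6-8) that by (intro coprime_diff_powers)
  obtain c where "c > 0" "M c \<noteq> 0"
  proof -
    obtain N where "\<forall>k\<ge>N. 0 < \<bar>M k\<bar>" using grows[of 0] by (auto simp: eventually_sequentially)
    then show thesis using that[of "Suc N"] by auto
  qed
  define P where "P = (\<Prod>p\<in>F. int p)"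
  have "P > 0" unfolding P_def F_def by (rule prod_pos) (auto dest: prime_gt_0_nat)
  have "coprime P (A * B)" unfolding P_def F_def
    using coprime_M by (auto intro!: prod_coprime_left intro: coprime_divisors[OF _ dvd_refl])
  define R where "R = \<bar>M c\<bar> * P"
  have "R > 0" unfolding R_def using \<open>M c \<noteq> 0\<close> \<open>P > 0\<close> by simp
  have "coprime (A * B) R"
    unfolding R_def using coprime_M[OF \<open>c > 0\<close>] \<open>coprime P (A * B)\<close> by (simp add: ac_simps)
  define L where "L = totient (nat R)"
  have "L > 0" unfolding L_def using \<open>R > 0\<close> by simp
  obtain m where "\<bar>M c\<bar> < \<bar>M (c + m * L)\<bar>"
  proof -
    obtain N where "\<forall>k\<ge>N. \<bar>M c\<bar> < \<bar>M k\<bar>"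
      using grows[of "\<bar>M c\<bar>"] by (auto simp: eventually_sequentially)
    moreover have "N \<le> c + N * L" using \<open>L > 0\<close> by (simp add: trans_le_add2)
    ultimately show thesis using that[of N] by blast
  qed
  define k where "k = c + m * L"
  have "[M k = M c] (mod R)"
    unfolding k_def L_def M_def using \<open>R > 0\<close> \<open>coprime (A * B) R\<close>
    by (intro diff_powers_shift_cong) auto
  then have "M c * P dvd M k - M c"
    unfolding R_def cong_iff_dvd_diff using \<open>P > 0\<close> by (metis abs_dvd_iff abs_mult abs_of_pos)
  then obtain s where s: "M k - M c = M c * P * s" by (elim dvdE)
  define z where "z = 1 + P * s"
  have "M k = M c * z" using s unfolding z_def by (simp add: algebra_simps)
  then have "\<bar>z\<bar> \<noteq> 1" using \<open>\<bar>M c\<bar> < \<bar>M (c + m * L)\<bar>\<close> unfolding k_def by (auto simp: abs_mult)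
  then obtain q where q: "prime q" "q dvd z" by (elim prime_factor_int)
  moreover have "k > 0" "q dvd M k" using \<open>c > 0\<close> q(2) \<open>M k = M c * z\<close> unfolding k_def by auto
  ultimately have "nat q \<in> F" unfolding F_def by (auto simp: prime_ge_0_int)
  then have "q dvd P"
    unfolding P_def using \<open>finite F\<close> q(1) by (metis dvd_prodI int_nat_eq prime_ge_0_int)
  then have "q dvd 1" using q(2) unfolding z_def by (simp add: dvd_add_left_iff)
  then show False using q(1) not_prime_unit by blast
qed

lemma coprime_div_gcd_power:
  fixes A C :: int
  assumes "C \<noteq> 0" "nat \<bar>C\<bar> \<le> t"
  shows "coprime (C div gcd C (A ^ t)) A"
proof (rule ccontr)
  define g where "g = gcd C (A ^ t)"
  assume "\<not> coprime (C div g) A"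
  then obtain d where d: "d dvd C div g" "d dvd A" "\<not> is_unit d" by (rule not_coprimeE)
  have "C div g \<noteq> 0" using \<open>C \<noteq> 0\<close> unfolding g_def by (metis dvd_div_eq_0_iff gcd_dvd1)
  then obtain q where q: "prime q" "q dvd C div g" "q dvd A"
    using d prime_divisor_exists[of d] by (metis dvd_trans dvd_0_left)
  define e where "e = multiplicity q C"
  have "q ^ e dvd C" unfolding e_def by (rule multiplicity_dvd)
  have "int e < 2 ^ e" by simp
  also have "\<dots> \<le> q ^ e" using prime_ge_2_int[OF q(1)] by (intro power_mono) auto
  also have "\<dots> \<le> \<bar>C\<bar>" using \<open>q ^ e dvd C\<close> \<open>C \<noteq> 0\<close> prime_gt_0_int[OF q(1)]
    by (metis dvd_imp_le_int zero_less_power abs_of_pos)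
  finally have "e \<le> t" using assms(2) by linarith
  then have "q ^ e dvd A ^ t" using q(3) by (meson dvd_power_same le_imp_power_dvd dvd_trans)
  with \<open>q ^ e dvd C\<close> have "q ^ e dvd g" unfolding g_def by simp
  then have "q ^ e * q dvd g * (C div g)" using q(2) by (rule mult_dvd_mono)
  then have "q ^ Suc e dvd C" unfolding g_def by (simp add: mult.commute)
  then have "Suc e \<le> multiplicity q C"
    using \<open>C \<noteq> 0\<close> q(1) by (intro multiplicity_geI) (auto simp: not_prime_unit)
  then show False unfolding e_def by simp
qed

lemma diff_powers_factor_coprime:
  fixes A B C D :: int
  assumes "coprime A B" "A \<noteq> 0" "B \<noteq> 0" "C \<noteq> 0" "D \<noteq> 0"
  obtains X Y g t where "coprime X A" "coprime Y B" "X \<noteq> 0" "Y \<noteq> 0"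
    "\<And>k. C * B ^ (k + t) - A ^ (k + t) * D = g * (X * B ^ k - A ^ k * Y)"
proof -
  define t where "t = nat \<bar>C\<bar> + nat \<bar>D\<bar>"
  define gC where "gC = gcd C (A ^ t)"
  define gD where "gD = gcd D (B ^ t)"
  define X where "X = C div gC * (B ^ t div gD)"
  define Y where "Y = A ^ t div gC * (D div gD)"
  have "B ^ t div gD dvd B ^ t"
    using dvd_triv_right[of "B ^ t div gD" gD] by (simp add: gD_def)
  then have B_part: "coprime (B ^ t div gD) A"
    by (rule coprime_divisors[OF _ dvd_refl]) (simp add: assms(1) coprime_commute)
  have "A ^ t div gC dvd A ^ t"
    using dvd_triv_right[of "A ^ t div gC" gC] by (simp add: gC_def)
  then have A_part: "coprime (A ^ t div gC) B"
    by (rule coprime_divisors[OF _ dvd_refl]) (simp add: assms(1))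
  have "coprime (C div gC) A" "coprime (D div gD) B"
    unfolding gC_def gD_def t_def using assms(4,5) by (auto intro: coprime_div_gcd_power)
  with A_part B_part have "coprime X A" "coprime Y B" unfolding X_def Y_def by simp_all
  moreover have "X \<noteq> 0" "Y \<noteq> 0"
    using assms(2-5) unfolding X_def Y_def gC_def gD_def by (auto simp: dvd_div_eq_0_iff)
  moreover have "C * B ^ (k + t) - A ^ (k + t) * D = gC * gD * (X * B ^ k - A ^ k * Y)" for k
  proof -
    have "C * B ^ (k + t) - A ^ (k + t) * D = C * B ^ t * B ^ k - A ^ t * A ^ k * D"
      by (simp add: power_add ac_simps)
    also have "\<dots> = gC * (C div gC) * (gD * (B ^ t div gD)) * B ^ k
                   - gC * (A ^ t div gC) * A ^ k * (gD * (D div gD))"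
      unfolding gC_def gD_def by simp
    also have "\<dots> = gC * gD * (X * B ^ k - A ^ k * Y)"
      unfolding X_def Y_def by (simp add: algebra_simps)
    finally show ?thesis .
  qed
  ultimately show thesis by (rule that)
qed

lemma cong_cross_powers_imp_not_dvd:
  fixes p A B C D :: int
  assumes "prime p" "\<not> p dvd A" "\<not> p dvd B" "coprime C D" "[C * B ^ n = A ^ n * D] (mod p)"
  shows "\<not> p dvd C \<and> \<not> p dvd D"
proof -
  have "\<not> p dvd A ^ n" "\<not> p dvd B ^ n" using assms(1-3) prime_dvd_power by blast+
  then have "p dvd C \<longleftrightarrow> p dvd D"
    using cong_dvd_iff[OF assms(5)] assms(1) by (simp add: prime_dvd_mult_iff)
  moreover have "\<not> (p dvd C \<and> p dvd D)"
    using assms(1,4) coprime_common_divisor not_prime_unit by blast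
  ultimately show ?thesis by blast
qed

lemma infinite_primes_cong_cross_powers:
  fixes A B C D :: int
  assumes "\<bar>A\<bar> \<noteq> \<bar>B\<bar>" "A \<noteq> 0" "B \<noteq> 0" "C \<noteq> 0" "D \<noteq> 0" "coprime A B" "coprime C D"
  shows "infinite {p :: nat. prime p \<and> \<not> int p dvd A \<and> \<not> int p dvd B \<and> \<not> int p dvd C \<and>
                   \<not> int p dvd D \<and> (\<exists>n. [C * B ^ n = A ^ n * D] (mod int p))}"
    (is "infinite ?S")
proof -
  obtain X Y g t where XY: "coprime X A" "coprime Y B" "X \<noteq> 0" "Y \<noteq> 0"
    and factor: "\<And>k. C * B ^ (k + t) - A ^ (k + t) * D = g * (X * B ^ k - A ^ k * Y)"
    by (rule diff_powers_factor_coprime[OF assms(6,2-5)]) (rule that)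
  have "{p :: nat. prime p \<and> (\<exists>k>0. int p dvd X * B ^ k - A ^ k * Y)} \<subseteq> ?S"
  proof
    fix p assume "p \<in> {p :: nat. prime p \<and> (\<exists>k>0. int p dvd X * B ^ k - A ^ k * Y)}"
    then obtain k where p: "prime p" and "k > 0" and p_dvd: "int p dvd X * B ^ k - A ^ k * Y"
      by blast
    have "coprime (int p) (A * B)"
      using coprime_diff_powers[OF XY(1,2) assms(6) \<open>k > 0\<close>]
      by (rule coprime_divisors[OF p_dvd dvd_refl])
    then have "\<not> int p dvd A" "\<not> int p dvd B"
      using p by (auto simp: prime_dvd_mult_iff coprime_absorb_left dest: coprime_common_divisor)
    moreover have cong: "[C * B ^ (k + t) = A ^ (k + t) * D] (mod int p)"
      using p_dvd by (simp add: cong_iff_dvd_diff factor)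
    ultimately have "\<not> int p dvd C \<and> \<not> int p dvd D"
      using p assms(7) by (intro cong_cross_powers_imp_not_dvd) auto
    with p cong \<open>\<not> int p dvd A\<close> \<open>\<not> int p dvd B\<close> show "p \<in> ?S" by blast
  qed
  then show ?thesis
    by (rule infinite_super)
      (rule infinite_prime_divisors_diff_powers[OF assms(1-3) XY(3,4) assms(6) XY(1,2)])
qed

lemma quotient_of_power: "quotient_of (x ^ n) = (fst (quotient_of x) ^ n, snd (quotient_of x) ^ n)"
proof -
  obtain A B where AB: "quotient_of x = (A, B)" by fastforce
  then have "B > 0" "coprime A B" "x = Fract A B"
    using Fract_quotient_of[of x] by (auto intro: quotient_of_denom_pos quotient_of_coprime)
  moreover have "Fract A B ^ n = Fract (A ^ n) (B ^ n)"
    by (induction n) (simp_all add: One_rat_def)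
  ultimately show ?thesis using AB by (simp add: quotient_of_Fract)
qed

lemma rat_num_power: "rat_num (x ^ n) = rat_num x ^ n"
  and rat_den_power: "rat_den (x ^ n) = rat_den x ^ n"
  by (simp_all add: rat_num_def rat_den_def quotient_of_power)

lemma rat_den_pos: "rat_den x > 0"
  unfolding rat_den_def by (rule quotient_of_denom_pos')

lemma coprime_rat_num_den: "coprime (rat_num x) (rat_den x)"
  unfolding rat_num_def rat_den_def by (rule quotient_of_coprime) simp

lemma rat_num_den_div: "x = of_int (rat_num x) / of_int (rat_den x)"
  unfolding rat_num_def rat_den_def by (rule quotient_of_div) simp

lemma rat_num_eq_0_iff: "rat_num x = 0 \<longleftrightarrow> x = 0"
  by (metis rat_num_den_div div_0 of_int_0 rat_num_def quotient_of_number(1) prod.sel(1))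

lemma abs_rat_num_eq_den_imp_pm1: "\<bar>rat_num x\<bar> = \<bar>rat_den x\<bar> \<Longrightarrow> x = 1 \<or> x = - 1"
proof -
  assume eq: "\<bar>rat_num x\<bar> = \<bar>rat_den x\<bar>"
  then have "rat_num x dvd rat_den x" by (metis dvd_abs_iff dvd_refl)
  then have "is_unit (rat_num x)" using coprime_rat_num_den[of x] by (simp add: coprime_absorb_left)
  then have "rat_den x = 1" "rat_num x = 1 \<or> rat_num x = - 1"
    using eq rat_den_pos[of x] by auto
  then show ?thesis using rat_num_den_div[of x] by auto
qed

lemma ord_p_eq_0I: "\<not> int p dvd rat_num x \<Longrightarrow> \<not> int p dvd rat_den x \<Longrightarrow> ord_p p x = 0"
  by (simp add: ord_p_def not_dvd_imp_multiplicity_0)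

lemma rat_mod_eq_power_iff:
  "rat_mod_eq p y (x ^ n) \<longleftrightarrow> [rat_num y * rat_den x ^ n = rat_num x ^ n * rat_den y] (mod int p)"
  by (simp add: rat_mod_eq_def rat_num_power rat_den_power)

lemma mult_independent_not_root_of_unity: "mult_independent a b \<Longrightarrow> n > 0 \<Longrightarrow> a ^ n \<noteq> 1"
  unfolding mult_independent_def
  by (metis of_nat_0_less_iff less_irrefl power_int_0_right power_int_of_nat mult_1_right)

theorem theorem1:
  fixes a b :: rat
  assumes "a \<noteq> 0" and "b \<noteq> 0" and "mult_independent a b"
  shows "infinite {p :: nat. prime p \<and> ord_p p a = 0 \<and> ord_p p b = 0 \<and>
                    (\<exists>k :: nat. rat_mod_eq p b (a ^ k))}"
proof -
  have "a ^ 2 \<noteq> 1" using assms(3) by (rule mult_independent_not_root_of_unity) simp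
  then have "\<bar>rat_num a\<bar> \<noteq> \<bar>rat_den a\<bar>" using abs_rat_num_eq_den_imp_pm1 by fastforce
  then have "infinite {p :: nat. prime p \<and> \<not> int p dvd rat_num a \<and> \<not> int p dvd rat_den a \<and>
      \<not> int p dvd rat_num b \<and> \<not> int p dvd rat_den b \<and>
      (\<exists>n. [rat_num b * rat_den a ^ n = rat_num a ^ n * rat_den b] (mod int p))}"
    using assms(1,2) rat_den_pos[of a] rat_den_pos[of b]
    by (intro infinite_primes_cong_cross_powers) (auto simp: rat_num_eq_0_iff coprime_rat_num_den)
  then show ?thesis
    by (rule infinite_super[rotated]) (auto simp: ord_p_eq_0I rat_mod_eq_power_iff)
qed

end
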